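(* If $A\subset\mathbb{X}$ is an open set with $\eta(\partial A)=0$, then $\tau(\overline A)\le\eta(A)$.
   Context: $\mathbb{X}$ is a compact metric space. $(\xi_j)_{j\in\mathbb N}$ is a sequence of finitely additive outer probabilities on $\mathbb{X}$ (set functions on all subsets, values in $[0,1]$, finitely additive, $\xi_j(\mathbb{X})=1$). For $A\subset\mathbb{X}$, $\tau(A)=\limsup_{n\to\infty}\frac1n\sum_{j=0}^{n-1}\xi_j(A)$. For $Y\subset\mathbb{X}$ and $r>0$, $\nu_r(Y)=\inf\sum_{I\in\mathcal I}\tau(I)$ over all countable covers $\mathcal I$ of $Y$ by open sets of diameter at most $r$; $\nu(Y)=\sup_{r>0}\nu_r(Y)$; $\eta$ is the restriction of $\nu$ to the Borel $\sigma$-algebra. $\partial A$ is the topological boundary and $\overline A$ the closure. *)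

theory Defs
  imports "HOL-Analysis.Analysis"
begin

definition fa_outer_prob :: "('a set \<Rightarrow> real) \<Rightarrow> bool" where
  "fa_outer_prob \<mu> \<longleftrightarrow>
     (\<forall>A. 0 \<le> \<mu> A \<and> \<mu> A \<le> 1) \<and>
     (\<forall>A B. A \<inter> B = {} \<longrightarrow> \<mu> (A \<union> B) = \<mu> A + \<mu> B) \<and>
     \<mu> UNIV = 1"

definition tau :: "(nat \<Rightarrow> 'a set \<Rightarrow> real) \<Rightarrow> 'a set \<Rightarrow> ennreal" where
  "tau \<xi> A = limsup (\<lambda>n. ennreal ((\<Sum>j<n. \<xi> j A) / real n))"

definition nu_r :: "(nat \<Rightarrow> 'a::metric_space set \<Rightarrow> real) \<Rightarrow> real \<Rightarrow> 'a set \<Rightarrow> ennreal" where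
  "nu_r \<xi> r Y = (INF \<I> \<in> {\<I>. countable \<I> \<and> (\<forall>I\<in>\<I>. open I \<and> diameter I \<le> r) \<and> Y \<subseteq> \<Union>\<I>}.
                    (\<Sum>\<^sub>\<infinity> I\<in>\<I>. tau \<xi> I))"

definition nu :: "(nat \<Rightarrow> 'a::metric_space set \<Rightarrow> real) \<Rightarrow> 'a set \<Rightarrow> ennreal" where
  "nu \<xi> Y = (SUP r \<in> {0<..}. nu_r \<xi> r Y)"

definition eta :: "(nat \<Rightarrow> 'a::metric_space set \<Rightarrow> real) \<Rightarrow> 'a set \<Rightarrow> ennreal" where
  "eta \<xi> A = (if A \<in> sets borel then nu \<xi> A else undefined)"

end

theory Submission
  imports Defs
begin

text \<open>Cover the open set \<open>A\<close> and its null boundary by countable open families whose \<open>tau\<close>-sums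
  exceed \<open>nu A\<close> and \<open>0\<close> by at most \<open>\<epsilon>\<close>. Together they cover the compact set \<open>closure A\<close>, so finitely
  many of them do, and \<open>tau\<close> is monotone and finitely subadditive because each \<open>\<xi>\<^sub>j\<close> is and the
  \<open>limsup\<close> of a finite sum of nonnegative sequences is at most the sum of the \<open>limsup\<close>s.\<close>

lemma enn2ereal_limsup: "enn2ereal (limsup u) = limsup (\<lambda>n. enn2ereal (u n :: ennreal))"
proof -
  have "limsup u = limsup (\<lambda>n. e2ennreal (enn2ereal (u n)))"
    by simp
  also have "\<dots> = e2ennreal (limsup (\<lambda>n. enn2ereal (u n)))"
    by (rule Limsup_compose_continuous_mono)
       (auto simp: continuous_on_e2ennreal mono_def e2ennreal_mono)
  finally show ?thesis
    using le_Limsup[of sequentially 0 "\<lambda>n. enn2ereal (u n)"]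
    by (simp add: enn2ereal_e2ennreal)
qed

lemma ennreal_limsup_add_mono:
  "limsup (\<lambda>n. u n + v n :: ennreal) \<le> limsup u + limsup v"
proof -
  have "enn2ereal (limsup (\<lambda>n. u n + v n))
        = limsup (\<lambda>n. enn2ereal (u n) + enn2ereal (v n))"
    by (simp add: enn2ereal_limsup plus_ennreal.rep_eq)
  also have "\<dots> \<le> limsup (\<lambda>n. enn2ereal (u n)) + limsup (\<lambda>n. enn2ereal (v n))"
    by (rule ereal_limsup_add_mono)
  also have "\<dots> = enn2ereal (limsup u + limsup v)"
    by (simp add: enn2ereal_limsup plus_ennreal.rep_eq)
  finally show ?thesis
    by (simp add: less_eq_ennreal.rep_eq)
qed

lemma ennreal_limsup_sum_mono:
  fixes f :: "'b \<Rightarrow> nat \<Rightarrow> ennreal"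
  assumes "finite F"
  shows "limsup (\<lambda>n. \<Sum>i\<in>F. f i n) \<le> (\<Sum>i\<in>F. limsup (f i))"
  using assms
proof (induction F rule: finite_induct)
  case empty
  then show ?case by (simp add: Limsup_const)
next
  case (insert x F)
  have "limsup (\<lambda>n. \<Sum>i\<in>insert x F. f i n) = limsup (\<lambda>n. f x n + (\<Sum>i\<in>F. f i n))"
    using insert by simp
  also have "\<dots> \<le> limsup (f x) + limsup (\<lambda>n. \<Sum>i\<in>F. f i n)"
    by (rule ennreal_limsup_add_mono)
  also have "\<dots> \<le> limsup (f x) + (\<Sum>i\<in>F. limsup (f i))"
    using insert by (intro add_left_mono)
  finally show ?case
    using insert by simp
qed

lemma ennreal_sum_le_infsum:
  fixes f :: "'b \<Rightarrow> ennreal"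
  assumes "finite F" "F \<subseteq> A"
  shows "sum f F \<le> infsum f A"
  using assms by (subst nonneg_infsum_complete) (auto intro!: SUP_upper)

lemma ennreal_infsum_Un_le:
  fixes f :: "'b \<Rightarrow> ennreal"
  shows "infsum f (A \<union> B) \<le> infsum f A + infsum f B"
proof -
  have "infsum f (A \<union> B) = infsum f A + infsum f (B - A)"
    by (metis Un_Diff_cancel infsum_Un_disjoint Diff_disjoint nonneg_summable_on_complete zero_le)
  also have "\<dots> \<le> infsum f A + infsum f B"
    by (intro add_left_mono infsum_mono_neutral) (auto intro: nonneg_summable_on_complete)
  finally show ?thesis .
qed

lemma fa_outer_prob_nonneg: "fa_outer_prob \<mu> \<Longrightarrow> 0 \<le> \<mu> A"
  unfolding fa_outer_prob_def by blast

lemma fa_outer_prob_Un_Diff: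
  "fa_outer_prob \<mu> \<Longrightarrow> \<mu> (A \<union> B) = \<mu> A + \<mu> (B - A)"
  unfolding fa_outer_prob_def by (metis Diff_disjoint Un_Diff_cancel)

lemma fa_outer_prob_mono:
  assumes "fa_outer_prob \<mu>" "A \<subseteq> B"
  shows "\<mu> A \<le> \<mu> B"
  using fa_outer_prob_Un_Diff[OF assms(1), of A B] fa_outer_prob_nonneg[OF assms(1), of "B - A"] assms(2)
  by (simp add: sup.absorb2)

lemma fa_outer_prob_Un_le:
  assumes "fa_outer_prob \<mu>"
  shows "\<mu> (A \<union> B) \<le> \<mu> A + \<mu> B"
  using fa_outer_prob_Un_Diff[OF assms, of A B] fa_outer_prob_mono[OF assms, of "B - A" B]
  by simp

lemma fa_outer_prob_Union_le:
  assumes "fa_outer_prob \<mu>" "finite F"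
  shows "\<mu> (\<Union>F) \<le> (\<Sum>I\<in>F. \<mu> I)"
  using assms(2)
proof (induction F rule: finite_induct)
  case empty
  show ?case
    using fa_outer_prob_Un_Diff[OF assms(1), of "{}" "{}"] by simp
next
  case (insert x F)
  then show ?case
    using fa_outer_prob_Un_le[OF assms(1), of x "\<Union>F"] by simp
qed

lemma tau_mono:
  assumes "\<And>j. fa_outer_prob (\<xi> j)" "A \<subseteq> B"
  shows "tau \<xi> A \<le> tau \<xi> B"
  unfolding tau_def
proof (intro Limsup_mono always_eventually allI)
  fix n
  have "(\<Sum>j<n. \<xi> j A) \<le> (\<Sum>j<n. \<xi> j B)"
    by (intro sum_mono fa_outer_prob_mono assms)
  then show "ennreal ((\<Sum>j<n. \<xi> j A) / real n) \<le> ennreal ((\<Sum>j<n. \<xi> j B) / real n)"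
    by (intro ennreal_leI divide_right_mono) auto
qed

lemma tau_Union_le:
  assumes "\<And>j. fa_outer_prob (\<xi> j)" "finite F"
  shows "tau \<xi> (\<Union>F) \<le> (\<Sum>I\<in>F. tau \<xi> I)"
proof -
  have "tau \<xi> (\<Union>F) \<le> limsup (\<lambda>n. \<Sum>I\<in>F. ennreal ((\<Sum>j<n. \<xi> j I) / real n))"
    unfolding tau_def
  proof (intro Limsup_mono always_eventually allI)
    fix n
    have "(\<Sum>j<n. \<xi> j (\<Union>F)) \<le> (\<Sum>j<n. \<Sum>I\<in>F. \<xi> j I)"
      by (intro sum_mono fa_outer_prob_Union_le assms)
    also have "\<dots> = (\<Sum>I\<in>F. \<Sum>j<n. \<xi> j I)"
      by (rule sum.swap)
    finally have "(\<Sum>j<n. \<xi> j (\<Union>F)) / real n \<le> (\<Sum>I\<in>F. (\<Sum>j<n. \<xi> j I) / real n)"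
      by (simp add: sum_divide_distrib[symmetric] divide_right_mono)
    moreover have "\<And>I. 0 \<le> (\<Sum>j<n. \<xi> j I) / real n"
      by (intro divide_nonneg_nonneg sum_nonneg fa_outer_prob_nonneg[OF assms(1)]) auto
    ultimately show "ennreal ((\<Sum>j<n. \<xi> j (\<Union>F)) / real n)
                     \<le> (\<Sum>I\<in>F. ennreal ((\<Sum>j<n. \<xi> j I) / real n))"
      by (simp add: ennreal_leI)
  qed
  also have "\<dots> \<le> (\<Sum>I\<in>F. tau \<xi> I)"
    unfolding tau_def by (rule ennreal_limsup_sum_mono[OF assms(2)])
  finally show ?thesis .
qed

lemma tau_compact_le_infsum:
  assumes "\<And>j. fa_outer_prob (\<xi> j)" "compact K" "K \<subseteq> \<Union>\<I>" "\<And>I. I \<in> \<I> \<Longrightarrow> open I"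
  shows "tau \<xi> K \<le> (\<Sum>\<^sub>\<infinity> I\<in>\<I>. tau \<xi> I)"
proof -
  obtain G where G: "G \<subseteq> \<I>" "finite G" "K \<subseteq> \<Union>G"
    using compactE[OF assms(2-4)] by blast
  have "tau \<xi> K \<le> tau \<xi> (\<Union>G)"
    by (rule tau_mono[OF assms(1) G(3)])
  also have "\<dots> \<le> (\<Sum>I\<in>G. tau \<xi> I)"
    by (rule tau_Union_le[OF assms(1) G(2)])
  also have "\<dots> \<le> (\<Sum>\<^sub>\<infinity> I\<in>\<I>. tau \<xi> I)"
    by (rule ennreal_sum_le_infsum[OF G(2,1)])
  finally show ?thesis .
qed

lemma nu_less_obtains_open_cover:
  assumes "nu \<xi> Y < c"
  obtains \<I> where "\<And>I. I \<in> \<I> \<Longrightarrow> open I" "Y \<subseteq> \<Union>\<I>" "(\<Sum>\<^sub>\<infinity> I\<in>\<I>. tau \<xi> I) < c"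
proof -
  have "nu_r \<xi> 1 Y \<le> nu \<xi> Y"
    unfolding nu_def by (rule SUP_upper) auto
  then have "nu_r \<xi> 1 Y < c"
    using assms by simp
  then show ?thesis
    unfolding nu_r_def INF_less_iff using that by blast
qed

lemma tau_compact_le_nu_add:
  assumes "\<And>j. fa_outer_prob (\<xi> j)" "compact K" "K \<subseteq> Y \<union> Z"
  shows "tau \<xi> K \<le> nu \<xi> Y + nu \<xi> Z"
proof (rule ennreal_le_epsilon)
  fix e :: real
  assume fin: "nu \<xi> Y + nu \<xi> Z < top" and "0 < e"
  then have e: "0 < ennreal (e/2)"
    by simp
  have "nu \<xi> Y < nu \<xi> Y + ennreal (e/2)" "nu \<xi> Z < nu \<xi> Z + ennreal (e/2)"
    using fin e by (auto simp: ennreal_add_left_cancel_less[of _ 0, simplified])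
  then obtain \<I> \<J> where
      \<I>: "\<And>I. I \<in> \<I> \<Longrightarrow> open I" "Y \<subseteq> \<Union>\<I>" "(\<Sum>\<^sub>\<infinity> I\<in>\<I>. tau \<xi> I) < nu \<xi> Y + ennreal (e/2)" and
      \<J>: "\<And>I. I \<in> \<J> \<Longrightarrow> open I" "Z \<subseteq> \<Union>\<J>" "(\<Sum>\<^sub>\<infinity> I\<in>\<J>. tau \<xi> I) < nu \<xi> Z + ennreal (e/2)"
    by (metis nu_less_obtains_open_cover)
  have "tau \<xi> K \<le> (\<Sum>\<^sub>\<infinity> I\<in>\<I> \<union> \<J>. tau \<xi> I)"
    using \<I> \<J> assms by (intro tau_compact_le_infsum) auto
  also have "\<dots> \<le> (\<Sum>\<^sub>\<infinity> I\<in>\<I>. tau \<xi> I) + (\<Sum>\<^sub>\<infinity> I\<in>\<J>. tau \<xi> I)"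
    by (rule ennreal_infsum_Un_le)
  also have "\<dots> \<le> (nu \<xi> Y + ennreal (e/2)) + (nu \<xi> Z + ennreal (e/2))"
    using \<I>(3) \<J>(3) by (intro add_mono) auto
  also have "\<dots> = nu \<xi> Y + nu \<xi> Z + ennreal e"
    using \<open>0 < e\<close> by (simp add: ac_simps flip: ennreal_plus)
  finally show "tau \<xi> K \<le> nu \<xi> Y + nu \<xi> Z + ennreal e" .
qed

theorem mainTheorem12:
  fixes \<xi> :: "nat \<Rightarrow> 'a::metric_space set \<Rightarrow> real" and A :: "'a set"
  assumes "compact (UNIV :: 'a set)"
    and "\<And>j. fa_outer_prob (\<xi> j)"
    and "open A"
    and "eta \<xi> (frontier A) = 0"
  shows "tau \<xi> (closure A) \<le> eta \<xi> A"
proof -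
  have "compact (closure A)"
    using closed_Int_compact[OF closed_closure assms(1)] by simp
  moreover have "closure A \<subseteq> A \<union> frontier A"
    using closure_Un_frontier by blast
  ultimately have "tau \<xi> (closure A) \<le> nu \<xi> A + nu \<xi> (frontier A)"
    by (rule tau_compact_le_nu_add[OF assms(2)])
  moreover have "nu \<xi> (frontier A) = 0"
    using assms(4) unfolding eta_def by auto
  moreover have "eta \<xi> A = nu \<xi> A"
    using assms(3) unfolding eta_def by auto
  ultimately show ?thesis
    by simp
qed

end
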